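(* Let $\Gamma$ be a connected extended Coxeter diagram with all vertex labels finite, and let $H^0=\{x\in\mathbb{C}^I: H_\Gamma(x,y)=0\text{ for all }y\in\mathbb{C}^I\}$ be the kernel of $H_\Gamma$. Then $G_\Gamma$ acts trivially on $H^0$ via $\rho$, and every proper $\rho(G_\Gamma)$-invariant subspace of $\mathbb{C}^I$ is contained in $H^0$.
   Context: An extended Coxeter diagram $\Gamma$ is a finite simplicial graph with vertex set $I$, labels $p_i\in\mathbb{Z}_{\ge2}\cup\{\infty\}$ on vertices and $m_{ij}\in\mathbb{Z}_{\ge3}\cup\{\infty\}$ on edges ($m_{ij}=2$ for non-edges, and $p_i=p_j$ whenever $m_{ij}$ is odd). $G_\Gamma=\langle s_i, i\in I\mid \mathrm{prod}(s_i,s_j;m_{ij})=\mathrm{prod}(s_j,s_i;m_{ij}),\ s_i^{p_i}=1\rangle$, with $\mathrm{prod}(a,b;m)$ the alternating word $aba\cdots$ of length $m$ (relations with $\infty$ omitted). For distinct $i,j$ joined by an edge set $\alpha_{ij}=-\left(\frac{\cos(\pi/p_i-\pi/p_j)+\cos(2\pi/m_{ij})}{2\sin(\pi/p_i)\sin(\pi/p_j)}\right)^{1/2}$; set $\alpha_{ii}=1$ and $\alpha_{ij}=0$ if $i\ne j$ are not joined by an edge. $H_\Gamma=\langle\cdot,\cdot\rangle$ is the Hermitian form on $\mathbb{C}^I$ with basis $\{e_i\}$ given by $\langle e_i,e_j\rangle=\alpha_{ij}$. The representation $\rho=\rho_\Gamma$ of $G_\Gamma$ on $\mathbb{C}^I$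 sends $s_i$ to the complex reflection $R_i(z)=z+(\zeta_{p_i}-1)\langle z,e_i\rangle e_i$, where $\zeta_{p_i}=\exp(2\pi\sqrt{-1}/p_i)$. *)

theory Defs
  imports "HOL-Analysis.Analysis" "HOL-Library.Extended_Nat"
begin

text \<open>Extended Coxeter diagram on the finite vertex type 'i, with finite vertex
  labels p i (natural numbers) and edge labels m i j in enat (infinity allowed);
  m i j = 2 encodes a non-edge.\<close>

definition ext_coxeter_diagram :: "('i \<Rightarrow> nat) \<Rightarrow> ('i \<Rightarrow> 'i \<Rightarrow> enat) \<Rightarrow> bool" where
  "ext_coxeter_diagram p m \<longleftrightarrow>
     (\<forall>i. p i \<ge> 2) \<and>
     (\<forall>i j. m i j = m j i) \<and>
     (\<forall>i j. i \<noteq> j \<longrightarrow> m i j \<ge> 2) \<and>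
     (\<forall>i j k. i \<noteq> j \<and> m i j = enat k \<and> odd k \<longrightarrow> p i = p j)"

definition is_edge :: "('i \<Rightarrow> 'i \<Rightarrow> enat) \<Rightarrow> 'i \<Rightarrow> 'i \<Rightarrow> bool" where
  "is_edge m i j \<longleftrightarrow> i \<noteq> j \<and> m i j \<noteq> 2"

definition diagram_connected :: "('i \<Rightarrow> 'i \<Rightarrow> enat) \<Rightarrow> bool" where
  "diagram_connected m \<longleftrightarrow> (\<forall>i j. (i, j) \<in> {(a, b). is_edge m a b}\<^sup>*)"

text \<open>cos(2 pi / m), with the value cos 0 = 1 for m = infinity.\<close>
definition cos_2pi_over :: "enat \<Rightarrow> real" where
  "cos_2pi_over e = (case e of enat k \<Rightarrow> cos (2 * pi / real k) | \<infinity> \<Rightarrow> 1)"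

definition alpha :: "('i \<Rightarrow> nat) \<Rightarrow> ('i \<Rightarrow> 'i \<Rightarrow> enat) \<Rightarrow> 'i \<Rightarrow> 'i \<Rightarrow> real" where
  "alpha p m i j =
     (if i = j then 1
      else if is_edge m i j then
        - sqrt ((cos (pi / real (p i) - pi / real (p j)) + cos_2pi_over (m i j))
                / (2 * sin (pi / real (p i)) * sin (pi / real (p j))))
      else 0)"

definition herm :: "('i::finite \<Rightarrow> nat) \<Rightarrow> ('i \<Rightarrow> 'i \<Rightarrow> enat)
                     \<Rightarrow> ('i \<Rightarrow> complex) \<Rightarrow> ('i \<Rightarrow> complex) \<Rightarrow> complex" where
  "herm p m x y = (\<Sum>i\<in>UNIV. \<Sum>j\<in>UNIV. x i * complex_of_real (alpha p m i j) * cnj (y j))"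

definition basis_vec :: "'i \<Rightarrow> ('i \<Rightarrow> complex)" where
  "basis_vec i = (\<lambda>j. if j = i then 1 else 0)"

definition herm_kernel :: "('i::finite \<Rightarrow> nat) \<Rightarrow> ('i \<Rightarrow> 'i \<Rightarrow> enat) \<Rightarrow> ('i \<Rightarrow> complex) set" where
  "herm_kernel p m = {x. \<forall>y. herm p m x y = 0}"

definition refl :: "('i::finite \<Rightarrow> nat) \<Rightarrow> ('i \<Rightarrow> 'i \<Rightarrow> enat) \<Rightarrow> 'i
                     \<Rightarrow> ('i \<Rightarrow> complex) \<Rightarrow> ('i \<Rightarrow> complex)" where
  "refl p m i z = (\<lambda>k. z k + (cis (2 * pi / real (p i)) - 1) * herm p m z (basis_vec i) * basis_vec i k)"

text \<open>The image rho(G_Gamma): the group generated by the reflections R_i, i.e. all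
  finite products of the R_i and their inverses.\<close>
inductive_set rho_group :: "('i::finite \<Rightarrow> nat) \<Rightarrow> ('i \<Rightarrow> 'i \<Rightarrow> enat)
                              \<Rightarrow> (('i \<Rightarrow> complex) \<Rightarrow> ('i \<Rightarrow> complex)) set"
  for p m where
    rg_id: "id \<in> rho_group p m"
  | rg_gen: "g \<in> rho_group p m \<Longrightarrow> refl p m i \<circ> g \<in> rho_group p m"
  | rg_inv: "g \<in> rho_group p m \<Longrightarrow> inv (refl p m i) \<circ> g \<in> rho_group p m"

definition csubspace :: "('i \<Rightarrow> complex) set \<Rightarrow> bool" where
  "csubspace V \<longleftrightarrow> (\<lambda>k. 0) \<in> V \<and> (\<forall>x\<in>V. \<forall>y\<in>V. (\<lambda>k. x k + y k) \<in> V) \<and>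
                   (\<forall>c. \<forall>x\<in>V. (\<lambda>k. c * x k) \<in> V)"

end

theory Submission
  imports Defs
begin

text \<open>The reflection \<open>R\<^sub>i\<close> moves \<open>z\<close> by a multiple of \<open>e\<^sub>i\<close> proportional to
  \<open>\<langle>z, e\<^sub>i\<rangle>\<close>, so it fixes the kernel of the form. Conversely, if \<open>V\<close> is
  \<open>R\<^sub>i\<close>-invariant and some \<open>v \<in> V\<close> has \<open>\<langle>v, e\<^sub>i\<rangle> \<noteq> 0\<close>, then \<open>e\<^sub>i\<close> is a
  multiple of \<open>R\<^sub>i v - v \<in> V\<close>, because \<open>\<zeta>\<^sub>p\<^sub>i \<noteq> 1\<close>. Since \<open>\<langle>e\<^sub>i, e\<^sub>j\<rangle> = \<alpha>\<^sub>i\<^sub>j \<noteq> 0\<close>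
  along every edge, one basis vector in \<open>V\<close> drags in all others by connectedness,
  so a proper invariant subspace is orthogonal to every \<open>e\<^sub>i\<close>, i.e. lies in the kernel.\<close>

lemma herm_basis_vec_right:
  "herm p m z (basis_vec i) = (\<Sum>k\<in>UNIV. z k * complex_of_real (alpha p m k i))"
  unfolding herm_def basis_vec_def
  by (simp add: if_distrib sum.delta cong: if_cong)

lemma herm_basis_vec_basis_vec:
  "herm p m (basis_vec i) (basis_vec j) = complex_of_real (alpha p m i j)"
proof -
  have "basis_vec i k * complex_of_real (alpha p m k j)
      = (if k = i then complex_of_real (alpha p m i j) else 0)" for k
    by (simp add: basis_vec_def)
  then show ?thesis
    unfolding herm_basis_vec_right by simp
qed

lemma herm_eq_sum_basis_vec:
  "herm p m x y = (\<Sum>j\<in>UNIV. herm p m x (basis_vec j) * cnj (y j))"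
proof -
  have "(\<Sum>j\<in>UNIV. herm p m x (basis_vec j) * cnj (y j))
      = (\<Sum>j\<in>UNIV. \<Sum>i\<in>UNIV. x i * complex_of_real (alpha p m i j) * cnj (y j))"
    unfolding herm_basis_vec_right by (simp add: sum_distrib_right)
  also have "\<dots> = herm p m x y"
    unfolding herm_def by (rule sum.swap)
  finally show ?thesis by simp
qed

lemma herm_kernel_iff_orthogonal_basis_vec:
  "x \<in> herm_kernel p m \<longleftrightarrow> (\<forall>j. herm p m x (basis_vec j) = 0)"
proof
  assume "\<forall>j. herm p m x (basis_vec j) = 0"
  then have "herm p m x y = 0" for y
    by (subst herm_eq_sum_basis_vec) simp
  then show "x \<in> herm_kernel p m"
    by (simp add: herm_kernel_def)
qed (simp add: herm_kernel_def)

lemma herm_refl_basis_vec: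
  "herm p m (refl p m i z) (basis_vec i) = cis (2 * pi / real (p i)) * herm p m z (basis_vec i)"
proof -
  let ?c = "(cis (2 * pi / real (p i)) - 1) * herm p m z (basis_vec i)"
  have "herm p m (refl p m i z) (basis_vec i)
      = herm p m z (basis_vec i) + ?c * herm p m (basis_vec i) (basis_vec i)"
    unfolding herm_basis_vec_right refl_def
    by (simp add: distrib_right sum.distrib sum_distrib_left mult.assoc)
  also have "\<dots> = cis (2 * pi / real (p i)) * herm p m z (basis_vec i)"
    by (simp add: herm_basis_vec_basis_vec alpha_def algebra_simps)
  finally show ?thesis .
qed

lemma inj_refl: "inj (refl p m i)"
proof (rule injI)
  fix z w assume eq: "refl p m i z = refl p m i w"
  then have "herm p m z (basis_vec i) = herm p m w (basis_vec i)"
    using herm_refl_basis_vec[of p m i] by (metis cis_neq_zero mult_cancel_left)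
  with eq show "z = w"
    unfolding refl_def by (auto simp: fun_eq_iff dest: fun_cong)
qed

lemma refl_fixes_herm_kernel: "x \<in> herm_kernel p m \<Longrightarrow> refl p m i x = x"
  by (simp add: herm_kernel_def refl_def)

lemma rho_group_fixes_herm_kernel:
  "g \<in> rho_group p m \<Longrightarrow> x \<in> herm_kernel p m \<Longrightarrow> g x = x"
proof (induction g rule: rho_group.induct)
  case (rg_inv g i)
  then show ?case
    by (simp add: inv_f_eq[OF inj_refl refl_fixes_herm_kernel])
qed (simp_all add: refl_fixes_herm_kernel)

lemma refl_in_rho_group: "refl p m i \<in> rho_group p m"
  using rho_group.rg_gen[OF rho_group.rg_id] by simp

lemma sin_pi_div_pos: "(n::nat) \<ge> 2 \<Longrightarrow> sin (pi / real n) > 0"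
  by (rule sin_gt_zero) (auto simp: field_simps)

lemma cos_pi_div_diff_pos:
  assumes "(a::nat) \<ge> 2" "(b::nat) \<ge> 2"
  shows "cos (pi / real a - pi / real b) > 0"
proof (rule cos_gt_zero_pi)
  have "pi / real a \<le> pi / 2" "pi / real a > 0" "pi / real b \<le> pi / 2" "pi / real b > 0"
    using assms by (auto simp: field_simps)
  then show "- (pi / 2) < pi / real a - pi / real b" "pi / real a - pi / real b < pi / 2"
    by linarith+
qed

lemma cos_2pi_over_nonneg:
  assumes "e \<ge> 4"
  shows "cos_2pi_over e \<ge> 0"
proof (cases e)
  case (enat k)
  with assms have "k \<ge> 4" by (simp add: numeral_eq_enat)
  then have "2 * pi / real k \<le> pi / 2"
    by (simp add: field_simps)
  then have "cos (2 * pi / real k) \<ge> 0"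
    by (intro cos_ge_zero) (auto intro: order_trans[of _ 0])
  then show ?thesis using enat by (simp add: cos_2pi_over_def)
qed (simp add: cos_2pi_over_def)

text \<open>For \<open>m\<^sub>i\<^sub>j \<ge> 4\<close> (including \<open>\<infinity>\<close>) both cosines are nonnegative and the first is positive; the only
  remaining edge label \<open>m\<^sub>i\<^sub>j = 3\<close> is odd, which forces \<open>p\<^sub>i = p\<^sub>j\<close> and the numerator
  becomes \<open>1 - 1/2\<close>.\<close>

lemma alpha_edge_numerator_pos:
  assumes D: "ext_coxeter_diagram p m" and E: "is_edge m i j"
  shows "cos (pi / real (p i) - pi / real (p j)) + cos_2pi_over (m i j) > 0"
proof -
  have p2: "p i \<ge> 2" "p j \<ge> 2" and m2: "m i j \<ge> 2"
    using D E by (auto simp: ext_coxeter_diagram_def is_edge_def)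
  have "m i j \<noteq> 2" using E by (simp add: is_edge_def)
  then have "m i j = 3 \<or> m i j \<ge> 4"
    using m2 by (cases "m i j") (auto simp: numeral_eq_enat)
  then consider "m i j = 3" | "m i j \<ge> 4" by blast
  then show ?thesis
  proof cases
    case 1
    then have "p i = p j"
      using D E by (auto simp: ext_coxeter_diagram_def is_edge_def numeral_eq_enat)
    with 1 show ?thesis
      by (simp add: cos_2pi_over_def numeral_eq_enat cos_120)
  next
    case 2
    then show ?thesis
      using cos_pi_div_diff_pos[OF p2] cos_2pi_over_nonneg by fastforce
  qed
qed

lemma alpha_edge_neg:
  assumes "ext_coxeter_diagram p m" and E: "is_edge m i j"
  shows "alpha p m i j < 0"
proof -
  have "p i \<ge> 2" "p j \<ge> 2"
    using assms(1) by (auto simp: ext_coxeter_diagram_def)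
  then have "2 * sin (pi / real (p i)) * sin (pi / real (p j)) > 0"
    using sin_pi_div_pos by simp
  with alpha_edge_numerator_pos[OF assms] E show ?thesis
    by (simp add: alpha_def is_edge_def)
qed

lemma csubspace_add: "csubspace V \<Longrightarrow> x \<in> V \<Longrightarrow> y \<in> V \<Longrightarrow> (\<lambda>k. x k + y k) \<in> V"
  by (simp add: csubspace_def)

lemma csubspace_scale: "csubspace V \<Longrightarrow> x \<in> V \<Longrightarrow> (\<lambda>k. c * x k) \<in> V"
  by (simp add: csubspace_def)

lemma csubspace_sum:
  assumes S: "csubspace V" and "finite A" and "\<And>i. i \<in> A \<Longrightarrow> f i \<in> V"
  shows "(\<lambda>k. \<Sum>i\<in>A. c i * f i k) \<in> V"
  using assms(2,3)
proof (induction A rule: finite_induct)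
  case empty
  then show ?case using S by (simp add: csubspace_def)
next
  case (insert a A)
  then have "(\<lambda>k. c a * f a k + (\<Sum>i\<in>A. c i * f i k)) \<in> V"
    using csubspace_add[OF S csubspace_scale[OF S]] by simp
  with insert show ?case by simp
qed

lemma csubspace_eq_UNIV_if_basis_vec:
  fixes V :: "('i::finite \<Rightarrow> complex) set"
  assumes S: "csubspace V" and basis: "\<And>i. basis_vec i \<in> V"
  shows "V = UNIV"
proof -
  have "x \<in> V" for x
  proof -
    have "(\<lambda>k. \<Sum>j\<in>UNIV. x j * basis_vec j k) \<in> V"
      by (rule csubspace_sum[OF S]) (simp_all add: basis)
    moreover have "(\<lambda>k. \<Sum>j\<in>UNIV. x j * basis_vec j k) = x"
      by (simp add: basis_vec_def fun_eq_iff if_distrib cong: if_cong)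
    ultimately show ?thesis by simp
  qed
  then show ?thesis by blast
qed

lemma cis_2pi_div_neq_1:
  assumes "(n::nat) \<ge> 2"
  shows "cis (2 * pi / real n) \<noteq> 1"
proof -
  have "0 < pi / real n" "pi / real n \<le> pi / 2"
    using assms by (auto simp: field_simps)
  then have "cos (2 * (pi / real n)) < 1"
    using pi_less_4 by (intro cos_double_less_one) linarith+
  then show ?thesis
    by (auto simp: complex_eq_iff)
qed

lemma basis_vec_in_refl_invariant_csubspace:
  assumes S: "csubspace V" and invariant: "refl p m i ` V \<subseteq> V" and "p i \<ge> 2"
    and v: "v \<in> V" and h: "herm p m v (basis_vec i) \<noteq> 0"
  shows "basis_vec i \<in> V"
proof -
  define c where "c = (cis (2 * pi / real (p i)) - 1) * herm p m v (basis_vec i)"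
  have "c \<noteq> 0"
    using h cis_2pi_div_neq_1[OF \<open>p i \<ge> 2\<close>] by (simp add: c_def)
  have "(\<lambda>k. refl p m i v k + (- 1) * v k) \<in> V"
    using invariant v by (intro csubspace_add[OF S] csubspace_scale[OF S]) auto
  moreover have "(\<lambda>k. refl p m i v k + (- 1) * v k) = (\<lambda>k. c * basis_vec i k)"
    by (simp add: refl_def c_def fun_eq_iff)
  ultimately have "(\<lambda>k. inverse c * (c * basis_vec i k)) \<in> V"
    using csubspace_scale[OF S] by simp
  with \<open>c \<noteq> 0\<close> show ?thesis
    by (simp add: mult.assoc[symmetric])
qed

lemma basis_vec_in_invariant_csubspace_along_edges:
  assumes D: "ext_coxeter_diagram p m" and S: "csubspace V"
    and invariant: "\<And>i. refl p m i ` V \<subseteq> V"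
    and path: "(i, j) \<in> {(a, b). is_edge m a b}\<^sup>*" and start: "basis_vec i \<in> V"
  shows "basis_vec j \<in> V"
  using path
proof (induction rule: rtrancl_induct)
  case (step k l)
  then have "is_edge m k l" by simp
  then have "herm p m (basis_vec k) (basis_vec l) \<noteq> 0"
    using alpha_edge_neg[OF D \<open>is_edge m k l\<close>] by (simp add: herm_basis_vec_basis_vec)
  moreover have "p l \<ge> 2"
    using D by (simp add: ext_coxeter_diagram_def)
  ultimately show ?case
    using basis_vec_in_refl_invariant_csubspace[OF S invariant _ step.IH] by simp
qed (rule start)

lemma proper_invariant_csubspace_orthogonal_basis_vec:
  assumes D: "ext_coxeter_diagram p m" and C: "diagram_connected m"
    and S: "csubspace V" and "V \<noteq> UNIV" and invariant: "\<And>i. refl p m i ` V \<subseteq> V"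
    and "v \<in> V"
  shows "herm p m v (basis_vec j) = 0"
proof (rule ccontr)
  assume nonzero: "herm p m v (basis_vec j) \<noteq> 0"
  have "p j \<ge> 2"
    using D by (simp add: ext_coxeter_diagram_def)
  from basis_vec_in_refl_invariant_csubspace[OF S invariant this \<open>v \<in> V\<close> nonzero]
  have "basis_vec j \<in> V" .
  have "basis_vec k \<in> V" for k
  proof (rule basis_vec_in_invariant_csubspace_along_edges[OF D S invariant])
    show "(j, k) \<in> {(a, b). is_edge m a b}\<^sup>*"
      using C by (simp add: diagram_connected_def)
  qed fact
  then have "V = UNIV"
    by (rule csubspace_eq_UNIV_if_basis_vec[OF S])
  with \<open>V \<noteq> UNIV\<close> show False by simp
qed

theorem lemma2p3:
  fixes p :: "'i::finite \<Rightarrow> nat" and m :: "'i \<Rightarrow> 'i \<Rightarrow> enat"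
  assumes "ext_coxeter_diagram p m"
    and "diagram_connected m"
  shows "(\<forall>g\<in>rho_group p m. \<forall>x\<in>herm_kernel p m. g x = x) \<and>
         (\<forall>V. csubspace V \<and> V \<noteq> UNIV \<and> (\<forall>g\<in>rho_group p m. g ` V \<subseteq> V)
               \<longrightarrow> V \<subseteq> herm_kernel p m)"
proof (intro conjI ballI allI impI subsetI)
  show "g x = x" if "g \<in> rho_group p m" "x \<in> herm_kernel p m" for g x
    using rho_group_fixes_herm_kernel that .
next
  fix V v
  assume V: "csubspace V \<and> V \<noteq> UNIV \<and> (\<forall>g\<in>rho_group p m. g ` V \<subseteq> V)" and "v \<in> V"
  have invariant: "refl p m i ` V \<subseteq> V" for i
    using V refl_in_rho_group[of p m i] by blast
  from V have "csubspace V" and "V \<noteq> UNIV" by simp_all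
  then have "\<forall>j. herm p m v (basis_vec j) = 0"
    by (intro allI proper_invariant_csubspace_orthogonal_basis_vec[OF assms _ _ invariant \<open>v \<in> V\<close>])
  then show "v \<in> herm_kernel p m"
    by (simp add: herm_kernel_iff_orthogonal_basis_vec)
qed

end
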